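(* Let $\mathfrak{n}$ be the real $7$-dimensional Lie algebra with basis $e_1,\dots,e_7$ whose nonzero brackets (up to antisymmetry) are $[e_1,e_2]=e_4$, $[e_1,e_4]=e_5$, $[e_1,e_5]=e_6$, $[e_2,e_3]=e_6$, $[e_2,e_4]=e_6$, $[e_2,e_6]=e_7$, $[e_4,e_5]=-e_7$. Then $\mathfrak{n}$ is not an Einstein nilradical.
   Context: A real nilpotent Lie algebra $\mathfrak{n}$ is called an Einstein nilradical if it admits an inner product such that the left-invariant Riemannian metric it defines on the simply connected nilpotent Lie group with Lie algebra $\mathfrak{n}$ is a nilsoliton, i.e. its Ricci operator satisfies $\mathrm{Ric}=c\,\mathrm{Id}+D$ for some $c\in\mathbb{R}$ and some derivation $D$ of $\mathfrak{n}$. Brackets of basis elements not listed are zero. *)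

theory Defs
  imports "HOL-Analysis.Analysis"
begin

definition inner_product_on :: "(real^'n \<Rightarrow> real^'n \<Rightarrow> real) \<Rightarrow> bool" where
  "inner_product_on B \<longleftrightarrow>
     (\<forall>x. linear (B x)) \<and> (\<forall>x y. B x y = B y x) \<and> (\<forall>x. x \<noteq> 0 \<longrightarrow> B x x > 0)"

definition orthonormal_basis :: "(real^'n \<Rightarrow> real^'n \<Rightarrow> real) \<Rightarrow> ('n \<Rightarrow> real^'n) \<Rightarrow> bool" where
  "orthonormal_basis B f \<longleftrightarrow> (\<forall>i j. B (f i) (f j) = (if i = j then 1 else 0))"

text \<open>Ricci form of a nilpotent metric Lie algebra (standard formula),
  computed in an orthonormal basis f:
  <Ric X, Y> = -1/2 sum_i <[X,f_i],[Y,f_i]> + 1/4 sum_{i,j} <[f_i,f_j],X> <[f_i,f_j],Y>.\<close>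
definition ricci_form ::
  "(real^'n \<Rightarrow> real^'n \<Rightarrow> real^'n) \<Rightarrow> (real^'n \<Rightarrow> real^'n \<Rightarrow> real) \<Rightarrow> ('n \<Rightarrow> real^'n)
     \<Rightarrow> real^'n \<Rightarrow> real^'n \<Rightarrow> real" where
  "ricci_form br B f X Y =
     - (1/2) * (\<Sum>i\<in>UNIV. B (br X (f i)) (br Y (f i)))
     + (1/4) * (\<Sum>i\<in>UNIV. \<Sum>j\<in>UNIV. B (br (f i) (f j)) X * B (br (f i) (f j)) Y)"

definition is_derivation :: "(real^'n \<Rightarrow> real^'n \<Rightarrow> real^'n) \<Rightarrow> (real^'n \<Rightarrow> real^'n) \<Rightarrow> bool" where
  "is_derivation br D \<longleftrightarrow> linear D \<and> (\<forall>x y. D (br x y) = br (D x) y + br x (D y))"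

text \<open>Ric = c Id + D, expressed through the inner product: <Ric X, Y> = c <X,Y> + <D X, Y>.\<close>
definition nilsoliton :: "(real^'n \<Rightarrow> real^'n \<Rightarrow> real^'n) \<Rightarrow> (real^'n \<Rightarrow> real^'n \<Rightarrow> real) \<Rightarrow> bool" where
  "nilsoliton br B \<longleftrightarrow>
     (\<exists>f. orthonormal_basis B f \<and>
       (\<exists>c D. is_derivation br D \<and>
          (\<forall>X Y. ricci_form br B f X Y = c * B X Y + B (D X) Y)))"

definition einstein_nilradical :: "(real^'n \<Rightarrow> real^'n \<Rightarrow> real^'n) \<Rightarrow> bool" where
  "einstein_nilradical br \<longleftrightarrow> (\<exists>B. inner_product_on B \<and> nilsoliton br B)"

text \<open>The 7-dimensional algebra: e_k is axis k 1 (with 7 = 0 in type 7);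
  [e1,e2]=e4, [e1,e4]=e5, [e1,e5]=e6, [e2,e3]=e6, [e2,e4]=e6, [e2,e6]=e7, [e4,e5]=-e7.\<close>
definition br7 :: "real^7 \<Rightarrow> real^7 \<Rightarrow> real^7" where
  "br7 x y =
     (x$1 * y$2 - x$2 * y$1) *\<^sub>R axis 4 1
   + (x$1 * y$4 - x$4 * y$1) *\<^sub>R axis 5 1
   + ((x$1 * y$5 - x$5 * y$1) + (x$2 * y$3 - x$3 * y$2) + (x$2 * y$4 - x$4 * y$2)) *\<^sub>R axis 6 1
   + ((x$2 * y$6 - x$6 * y$2) - (x$4 * y$5 - x$5 * y$4)) *\<^sub>R axis 7 1"

end

theory Submission
  imports Defs
begin

text \<open>Suppose the inner product \<open>B\<close> makes \<open>br7\<close> a nilsoliton, \<open>Ric = c Id + D\<close>. As \<open>Ric\<close> is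
  symmetric, \<open>D\<close> is self-adjoint. Every derivation of the algebra is \<open>t\<close> times the grading
  derivation \<open>diag(1, 2, 3, 3, 4, 5, 7)\<close> plus a part raising the degree, so in the orthonormal
  basis \<open>g\<^sub>1, \<dots>, g\<^sub>7\<close> obtained by Gram--Schmidt from \<open>e\<^sub>7, \<dots>, e\<^sub>1\<close> the map \<open>D\<close> is diagonal
  with eigenvalues \<open>t \<cdot> (1, 2, 3, 3, 4, 5, 7)\<close>. For \<open>t = 0\<close> the Ricci form would be \<open>c B\<close>,
  impossible because \<open>g\<^sub>1\<close> is orthogonal to the derived algebra while \<open>g\<^sub>7\<close> is central. For
  \<open>t \<noteq> 0\<close> the structure constants in the basis \<open>g\<close> are graded, and the resulting Ricci
  equations, together with two proportionalities forced by the triangular shape of \<open>g\<close>, have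
  no real solution.\<close>

section \<open>Inner products and orthonormal bases\<close>

lemma inner_product_on_sym: "inner_product_on B \<Longrightarrow> B x y = B y x"
  by (simp add: inner_product_on_def)

lemma inner_product_on_bilinear: "inner_product_on B \<Longrightarrow> bilinear B"
  unfolding bilinear_def by (metis inner_product_on_def inner_product_on_sym[of B] ext)

lemma inner_product_on_pos: "inner_product_on B \<Longrightarrow> x \<noteq> 0 \<Longrightarrow> B x x > 0"
  by (simp add: inner_product_on_def)

lemma inner_product_on_nonneg: "inner_product_on B \<Longrightarrow> B x x \<ge> 0"
  using inner_product_on_pos[of B x] bilinear_lzero[OF inner_product_on_bilinear, of B x]
  by (cases "x = 0") auto

lemma inner_product_on_self_eq_0: "inner_product_on B \<Longrightarrow> B x x = 0 \<longleftrightarrow> x = 0"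
  using inner_product_on_pos[of B x] bilinear_lzero[OF inner_product_on_bilinear, of B x] by force

lemma bilinear_sum_left: "bilinear h \<Longrightarrow> h (\<Sum>i\<in>S. f i) y = (\<Sum>i\<in>S. h (f i) y)"
  unfolding bilinear_def using linear_sum[of "\<lambda>x. h x y"] by blast

lemma bilinear_sum_right: "bilinear h \<Longrightarrow> h x (\<Sum>i\<in>S. f i) = (\<Sum>i\<in>S. h x (f i))"
  unfolding bilinear_def using linear_sum[of "h x"] by blast

lemmas bilinear_simps = bilinear_ladd bilinear_radd bilinear_lsub bilinear_rsub bilinear_lmul
  bilinear_rmul bilinear_lneg bilinear_rneg bilinear_lzero bilinear_rzero
  bilinear_sum_left bilinear_sum_right

lemma linear_axis_expansion:
  fixes f :: "real^'n \<Rightarrow> 'a::real_vector"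
  assumes "linear f"
  shows "f x = (\<Sum>j\<in>UNIV. x $ j *\<^sub>R f (axis j 1))"
proof -
  have "f x = f (\<Sum>j\<in>UNIV. x $ j *\<^sub>R axis j 1)"
    using basis_expansion[of x] by (simp add: scalar_mult_eq_scaleR)
  then show ?thesis
    by (simp add: linear_sum[OF assms] linear_cmul[OF assms])
qed

lemma linear_component_expansion:
  fixes D :: "real^'n \<Rightarrow> real^'m"
  assumes "linear D"
  shows "D x $ i = (\<Sum>j\<in>UNIV. x $ j * D (axis j 1) $ i)"
  using linear_axis_expansion[OF assms, of x] by simp

lemma orthonormal_basis_coeff:
  assumes "inner_product_on B" and "orthonormal_basis B (h :: 'n::finite \<Rightarrow> real^'n)"
  shows "B (\<Sum>i\<in>UNIV. a i *\<^sub>R h i) (h j) = a j"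
  using assms by (simp add: bilinear_simps[OF inner_product_on_bilinear] orthonormal_basis_def
      if_distrib[of "(*) _"] cong: if_cong)

lemma orthonormal_basis_expansion:
  assumes ip: "inner_product_on B" and on: "orthonormal_basis B (h :: 'n::finite \<Rightarrow> real^'n)"
  shows "v = (\<Sum>i\<in>UNIV. B v (h i) *\<^sub>R h i)"
proof -
  define Q where "Q a = (\<Sum>i\<in>UNIV. a $ i *\<^sub>R h i)" for a :: "real^'n"
  have "linear Q"
    by (rule linearI) (simp_all add: Q_def scaleR_add_left sum.distrib scaleR_sum_right)
  moreover have coeff: "B (Q a) (h j) = a $ j" for a j
    unfolding Q_def by (rule orthonormal_basis_coeff[OF ip on])
  then have "inj Q"
    by (metis injI vec_eq_iff)
  ultimately obtain a where v: "v = Q a"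
    by (metis linear_inj_imp_surj surjD)
  then show ?thesis
    using coeff by (simp add: Q_def)
qed

lemma orthonormal_basis_parseval:
  assumes ip: "inner_product_on B" and on: "orthonormal_basis B (h :: 'n::finite \<Rightarrow> real^'n)"
  shows "B u w = (\<Sum>i\<in>UNIV. B u (h i) * B w (h i))"
proof -
  have "B u w = B (\<Sum>i\<in>UNIV. B u (h i) *\<^sub>R h i) w"
    using orthonormal_basis_expansion[OF ip on] by metis
  then show ?thesis
    by (simp add: bilinear_simps[OF inner_product_on_bilinear[OF ip]]
        inner_product_on_sym[OF ip, of "h _" w])
qed

text \<open>Both sums equal \<open>\<psi> r\<close>, where \<open>r\<close> is the Riesz representative of \<open>\<phi>\<close>.\<close>
lemma orthonormal_basis_sum_products_indep:
  assumes ip: "inner_product_on B"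
    and f: "orthonormal_basis B (f :: 'n::finite \<Rightarrow> real^'n)" and g: "orthonormal_basis B g"
    and "linear (\<phi> :: real^'n \<Rightarrow> real)" and "linear (\<psi> :: real^'n \<Rightarrow> real)"
  shows "(\<Sum>i\<in>UNIV. \<phi> (f i) * \<psi> (f i)) = (\<Sum>i\<in>UNIV. \<phi> (g i) * \<psi> (g i))"
proof -
  note B_simps = bilinear_simps[OF inner_product_on_bilinear[OF ip]]
  define rep where "rep h = (\<Sum>i\<in>UNIV. \<phi> (h i) *\<^sub>R h i)" for h :: "'n \<Rightarrow> real^'n"
  have represents: "B (rep h) x = \<phi> x" if "orthonormal_basis B h" for h x
  proof -
    have "B (rep h) x = \<phi> (\<Sum>i\<in>UNIV. B x (h i) *\<^sub>R h i)"
      using \<open>linear \<phi>\<close> by (simp add: rep_def B_simps linear_sum linear_cmul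
          inner_product_on_sym[OF ip, of "h _" x] mult.commute)
    then show ?thesis
      using orthonormal_basis_expansion[OF ip that] by metis
  qed
  have "B (rep f - rep g) (rep f - rep g) = 0"
    by (simp add: B_simps represents[OF f] represents[OF g])
  then have "rep f = rep g"
    using inner_product_on_self_eq_0[OF ip] by simp
  moreover have "(\<Sum>i\<in>UNIV. \<phi> (h i) * \<psi> (h i)) = \<psi> (rep h)" for h
    using \<open>linear \<psi>\<close> by (simp add: rep_def linear_sum linear_cmul)
  ultimately show ?thesis
    by simp
qed

section \<open>The Ricci form\<close>

lemma ricci_form_sym:
  assumes "inner_product_on B"
  shows "ricci_form br B f X Y = ricci_form br B f Y X"
  unfolding ricci_form_def using inner_product_on_sym[OF assms] by (simp add: mult.commute)

lemma ricci_form_basis_indep: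
  assumes ip: "inner_product_on B" and br: "bilinear br"
    and f: "orthonormal_basis B (f :: 'n::finite \<Rightarrow> real^'n)" and g: "orthonormal_basis B g"
  shows "ricci_form br B f X Y = ricci_form br B g X Y"
proof -
  note B_simps = bilinear_simps[OF inner_product_on_bilinear[OF ip]]
  have lin_right: "linear (\<lambda>z. B (br x z) w)" for x w
    using br by (intro linearI) (simp_all add: bilinear_simps B_simps)
  have lin_left: "linear (\<lambda>z. B (br z x) w)" for x w
    using br by (intro linearI) (simp_all add: bilinear_simps B_simps)
  note indep = orthonormal_basis_sum_products_indep[OF ip f g]
  have first: "(\<Sum>i\<in>UNIV. B (br X (f i)) (br Y (f i))) = (\<Sum>i\<in>UNIV. B (br X (g i)) (br Y (g i)))"
  proof -
    have "(\<Sum>i\<in>UNIV. B (br X (f i)) (br Y (f i)))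
        = (\<Sum>i\<in>UNIV. \<Sum>k\<in>UNIV. B (br X (f i)) (g k) * B (br Y (f i)) (g k))"
      by (rule sum.cong[OF refl orthonormal_basis_parseval[OF ip g]])
    also have "\<dots> = (\<Sum>k\<in>UNIV. \<Sum>i\<in>UNIV. B (br X (f i)) (g k) * B (br Y (f i)) (g k))"
      by (rule sum.swap)
    also have "\<dots> = (\<Sum>k\<in>UNIV. \<Sum>i\<in>UNIV. B (br X (g i)) (g k) * B (br Y (g i)) (g k))"
      using indep[OF lin_right lin_right] by simp
    also have "\<dots> = (\<Sum>i\<in>UNIV. \<Sum>k\<in>UNIV. B (br X (g i)) (g k) * B (br Y (g i)) (g k))"
      by (rule sum.swap)
    also have "\<dots> = (\<Sum>i\<in>UNIV. B (br X (g i)) (br Y (g i)))"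
      by (rule sum.cong[OF refl orthonormal_basis_parseval[OF ip g, symmetric]])
    finally show ?thesis .
  qed
  have "(\<Sum>i\<in>UNIV. \<Sum>j\<in>UNIV. B (br (f i) (f j)) X * B (br (f i) (f j)) Y)
      = (\<Sum>i\<in>UNIV. \<Sum>j\<in>UNIV. B (br (f i) (g j)) X * B (br (f i) (g j)) Y)"
    using indep[OF lin_right lin_right] by simp
  also have "\<dots> = (\<Sum>j\<in>UNIV. \<Sum>i\<in>UNIV. B (br (f i) (g j)) X * B (br (f i) (g j)) Y)"
    by (rule sum.swap)
  also have "\<dots> = (\<Sum>j\<in>UNIV. \<Sum>i\<in>UNIV. B (br (g i) (g j)) X * B (br (g i) (g j)) Y)"
    using indep[OF lin_left lin_left] by simp
  also have "\<dots> = (\<Sum>i\<in>UNIV. \<Sum>j\<in>UNIV. B (br (g i) (g j)) X * B (br (g i) (g j)) Y)"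
    by (rule sum.swap)
  finally show ?thesis
    unfolding ricci_form_def first by simp
qed

text \<open>Self-adjointness of \<open>D\<close> comes from the symmetry of the Ricci form.\<close>
lemma nilsoliton_normal_form:
  assumes ip: "inner_product_on B" and br: "bilinear br" and "nilsoliton br B"
  obtains c D where "is_derivation br D" and "\<And>X Y. B (D X) Y = B X (D Y)"
    and "\<And>g X Y. orthonormal_basis B (g :: 'n::finite \<Rightarrow> real^'n) \<Longrightarrow>
           ricci_form br B g X Y = c * B X Y + B (D X) Y"
proof -
  obtain f c D where f: "orthonormal_basis B f" and der: "is_derivation br D"
    and ric: "\<And>X Y. ricci_form br B f X Y = c * B X Y + B (D X) Y"
    using \<open>nilsoliton br B\<close> unfolding nilsoliton_def by blast
  show thesis
  proof (rule that[OF der])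
    show "B (D X) Y = B X (D Y)" for X Y
      using ric[of X Y] ric[of Y X] ricci_form_sym[OF ip, of br f X Y]
        inner_product_on_sym[OF ip, of X Y] inner_product_on_sym[OF ip, of "D Y" X] by simp
    show "ricci_form br B g X Y = c * B X Y + B (D X) Y" if "orthonormal_basis B g" for g X Y
      using ric ricci_form_basis_indep[OF ip br f that] by simp
  qed
qed

definition structure_constant ::
    "(real^'n \<Rightarrow> real^'n \<Rightarrow> real^'n) \<Rightarrow> (real^'n \<Rightarrow> real^'n \<Rightarrow> real) \<Rightarrow> ('n \<Rightarrow> real^'n)
       \<Rightarrow> 'n \<Rightarrow> 'n \<Rightarrow> 'n \<Rightarrow> real" where
  "structure_constant br B g i j k = B (br (g i) (g j)) (g k)"

lemma ricci_form_structure_constants: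
  fixes br :: "real^'n::finite \<Rightarrow> real^'n \<Rightarrow> real^'n"
  assumes ip: "inner_product_on B" and g: "orthonormal_basis B g"
  defines "s \<equiv> structure_constant br B g"
  shows "ricci_form br B g (g a) (g b) =
           - (1/2) * (\<Sum>i\<in>UNIV. \<Sum>k\<in>UNIV. s a i k * s b i k)
           + (1/4) * (\<Sum>i\<in>UNIV. \<Sum>j\<in>UNIV. s i j a * s i j b)"
  unfolding ricci_form_def s_def structure_constant_def
  using sum.cong[OF refl orthonormal_basis_parseval[OF ip g, of "br (g a) (g i)" "br (g b) (g i)" for i]]
  by simp

lemma structure_constant_eigenvalues:
  assumes ip: "inner_product_on B" and br: "bilinear br" and der: "is_derivation br D"
    and adj: "\<And>X Y. B (D X) Y = B X (D Y)" and eigen: "\<And>k. D (g k) = \<mu> k *\<^sub>R g k"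
  shows "(\<mu> i + \<mu> j - \<mu> k) * structure_constant br B g i j k = 0"
proof -
  note B_simps = bilinear_simps[OF inner_product_on_bilinear[OF ip]]
  have "B (D (br (g i) (g j))) (g k) = (\<mu> i + \<mu> j) * structure_constant br B g i j k"
    using der eigen br
    by (simp add: is_derivation_def bilinear_simps B_simps structure_constant_def algebra_simps)
  moreover have "B (D (br (g i) (g j))) (g k) = \<mu> k * structure_constant br B g i j k"
    by (simp add: adj eigen B_simps structure_constant_def)
  ultimately show ?thesis
    by (simp add: algebra_simps)
qed

lemma ricci_form_neg_if_orthogonal_to_derived:
  assumes ip: "inner_product_on B" and orth: "\<And>x y. B (br x y) X = 0"
    and "br X (f i) \<noteq> 0"
  shows "ricci_form br B (f :: 'n::finite \<Rightarrow> real^'n) X X < 0"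
proof -
  have "0 < (\<Sum>k\<in>UNIV. B (br X (f k)) (br X (f k)))"
    using assms inner_product_on_pos[OF ip] inner_product_on_nonneg[OF ip]
    by (intro sum_pos2[of UNIV i]) auto
  then show ?thesis
    by (simp add: ricci_form_def orth)
qed

lemma ricci_form_nonneg_if_central:
  assumes ip: "inner_product_on B" and central: "\<And>y. br X y = 0"
  shows "ricci_form br B f X X \<ge> 0"
  using bilinear_lzero[OF inner_product_on_bilinear[OF ip]]
  by (simp add: ricci_form_def central sum_nonneg)

section \<open>Gram--Schmidt along a flag of coordinate subspaces\<close>

definition triangular_orthonormal_tail ::
    "(real^'n \<Rightarrow> real^'n \<Rightarrow> real) \<Rightarrow> ('n \<Rightarrow> nat) \<Rightarrow> nat \<Rightarrow> ('n \<Rightarrow> real^'n) \<Rightarrow> bool" where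
  "triangular_orthonormal_tail B r m g \<longleftrightarrow>
     (\<forall>i j. m \<le> r i \<longrightarrow> m \<le> r j \<longrightarrow> B (g i) (g j) = (if i = j then 1 else 0)) \<and>
     (\<forall>i j. m \<le> r i \<longrightarrow> r j < r i \<longrightarrow> g i $ j = 0) \<and>
     (\<forall>i. m \<le> r i \<longrightarrow> g i $ i > 0) \<and>
     (\<forall>j. m \<le> r j \<longrightarrow> axis j 1 \<in> span (g ` {i. r j \<le> r i}))"

lemma gram_schmidt_step:
  fixes B :: "real^'n::finite \<Rightarrow> real^'n \<Rightarrow> real"
  assumes ip: "inner_product_on B" and g: "triangular_orthonormal_tail B r (Suc n) g"
    and i0: "r i0 = n"
  defines "T \<equiv> {i. Suc n \<le> r i}"
  defines "u \<equiv> axis i0 1 - (\<Sum>k\<in>T. B (axis i0 1) (g k) *\<^sub>R g k)"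
  shows "u $ i0 = 1" and "\<And>j. r j < n \<Longrightarrow> u $ j = 0" and "\<And>k. k \<in> T \<Longrightarrow> B (g k) u = 0"
    and "B u u > 0"
proof -
  note B_simps = bilinear_simps[OF inner_product_on_bilinear[OF ip]]
  have orth: "B (g k) (g l) = (if k = l then 1 else 0)" if "k \<in> T" "l \<in> T" for k l
    using g that unfolding triangular_orthonormal_tail_def T_def by blast
  have tri: "g k $ j = 0" if "k \<in> T" "r j < r k" for k j
    using g that unfolding triangular_orthonormal_tail_def T_def by blast
  show "u $ i0 = 1"
    using tri i0 by (simp add: u_def T_def sum_component)
  then have "u \<noteq> 0"
    by auto
  then show "B u u > 0"
    using inner_product_on_pos[OF ip] by blast
  show "u $ j = 0" if "r j < n" for j
    using tri i0 that by (auto simp: u_def T_def sum_component axis_def intro!: sum.neutral)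
  show "B (g k) u = 0" if "k \<in> T" for k
  proof -
    have "(\<Sum>l\<in>T. B (axis i0 1) (g l) * B (g k) (g l)) = B (axis i0 1) (g k)"
      using that by (simp add: orth if_distrib[of "(*) _"] cong: if_cong)
    then show ?thesis
      by (simp add: u_def B_simps inner_product_on_sym[OF ip, of "g k" "axis i0 1"])
  qed
qed

lemma triangular_orthonormal_tail_insert:
  fixes B :: "real^'n::finite \<Rightarrow> real^'n \<Rightarrow> real"
  assumes ip: "inner_product_on B" and r: "inj r" and g: "triangular_orthonormal_tail B r (Suc n) g"
    and i0: "r i0 = n"
  shows "\<exists>g'. triangular_orthonormal_tail B r n g'"
proof -
  note B_simps = bilinear_simps[OF inner_product_on_bilinear[OF ip]]
  define T where "T = {i. Suc n \<le> r i}"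
  define u where "u = axis i0 1 - (\<Sum>k\<in>T. B (axis i0 1) (g k) *\<^sub>R g k)"
  note u = gram_schmidt_step[OF ip g i0, folded T_def, folded u_def]
  define g' where "g' = g(i0 := (1 / sqrt (B u u)) *\<^sub>R u)"
  have Tn: "n \<le> r i \<longleftrightarrow> i = i0 \<or> i \<in> T" for i
    using i0 injD[OF r, of i i0] by (auto simp: T_def)
  have i0_T: "i0 \<notin> T"
    using i0 by (simp add: T_def)
  have u_perp: "B u (g k) = 0" if "k \<in> T" for k
    using u(3)[OF that] inner_product_on_sym[OF ip, of u "g k"] by simp
  have u_unit: "B (g' i0) (g' i0) = 1"
    using u(4) by (simp add: g'_def B_simps power2_eq_square[symmetric] real_sqrt_pow2)
  have "(\<Sum>k\<in>T. B (axis i0 1) (g k) *\<^sub>R g' k) = (\<Sum>k\<in>T. B (axis i0 1) (g k) *\<^sub>R g k)"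
    using i0_T by (intro sum.cong) (auto simp: g'_def)
  then have "axis i0 1 = sqrt (B u u) *\<^sub>R g' i0 + (\<Sum>k\<in>T. B (axis i0 1) (g k) *\<^sub>R g' k)"
    using u(4) by (simp add: g'_def u_def)
  moreover have "g' k \<in> span (g' ` {i. r i0 \<le> r i})" if "k = i0 \<or> k \<in> T" for k
    using that i0 by (intro span_base) (auto simp: T_def)
  ultimately have span_i0: "axis i0 1 \<in> span (g' ` {i. r i0 \<le> r i})"
    by (metis (no_types, lifting) span_add span_scale span_sum)
  have span_T: "g' ` {i. r j \<le> r i} = g ` {i. r j \<le> r i}" if "j \<in> T" for j
    using that i0 by (auto simp: g'_def T_def)
  show ?thesis
    unfolding triangular_orthonormal_tail_def Tn
  proof (intro exI[of _ g'] conjI allI impI)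
    show "B (g' i) (g' j) = (if i = j then 1 else 0)"
      if "i = i0 \<or> i \<in> T" and "j = i0 \<or> j \<in> T" for i j
      using that g u(3) u_perp u_unit i0_T
      by (auto simp: g'_def T_def B_simps triangular_orthonormal_tail_def)
    show "g' i $ j = 0" if "i = i0 \<or> i \<in> T" and "r j < r i" for i j
      using that g u(2) i0 i0_T by (auto simp: g'_def T_def triangular_orthonormal_tail_def)
    show "g' i $ i > 0" if "i = i0 \<or> i \<in> T" for i
      using that g u(1,4) i0_T by (auto simp: g'_def T_def triangular_orthonormal_tail_def)
    show "axis j 1 \<in> span (g' ` {i. r j \<le> r i})" if "j = i0 \<or> j \<in> T" for j
      using that g span_i0 span_T by (auto simp: T_def triangular_orthonormal_tail_def)
  qed
qed

lemma triangular_orthonormal_tail_extend: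
  fixes B :: "real^'n::finite \<Rightarrow> real^'n \<Rightarrow> real"
  assumes ip: "inner_product_on B" and r: "inj r" and g: "triangular_orthonormal_tail B r (Suc n) g"
  shows "\<exists>g'. triangular_orthonormal_tail B r n g'"
proof (cases "\<exists>i0. r i0 = n")
  case False
  then have "n \<le> r i \<longleftrightarrow> Suc n \<le> r i" for i
    using le_eq_less_or_eq by auto
  then have "triangular_orthonormal_tail B r n g"
    using g unfolding triangular_orthonormal_tail_def by simp
  then show ?thesis
    by blast
qed (use triangular_orthonormal_tail_insert[OF ip r g] in blast)

lemma triangular_orthonormal_basis:
  fixes B :: "real^'n::finite \<Rightarrow> real^'n \<Rightarrow> real" and r :: "'n \<Rightarrow> nat"
  assumes ip: "inner_product_on B" and r: "inj r"
  obtains g where "orthonormal_basis B g" and "\<And>i j. r j < r i \<Longrightarrow> g i $ j = 0"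
    and "\<And>i. g i $ i > 0" and "\<And>i j. r i < r j \<Longrightarrow> B (g i) (axis j 1) = 0"
proof -
  define N where "N = Suc (Max (range r))"
  have "\<not> N \<le> r i" for i
    by (simp add: N_def not_le le_imp_less_Suc)
  then have start: "triangular_orthonormal_tail B r N (\<lambda>_. 0)"
    unfolding triangular_orthonormal_tail_def by blast
  have "\<exists>g. triangular_orthonormal_tail B r m g" if "m \<le> N" for m
    using that
  proof (induction rule: inc_induct)
    case base
    show ?case
      using start by blast
  next
    case (step m)
    then show ?case
      using triangular_orthonormal_tail_extend[OF ip r] by blast
  qed
  then obtain g where g: "triangular_orthonormal_tail B r 0 g"
    by blast
  have "B (g i) (axis j 1) = 0" if "r i < r j" for i j
  proof (rule linear_eq_0_on_span[of "B (g i)" "g ` {k. r j \<le> r k}"])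
    show "linear (B (g i))"
      using ip by (simp add: inner_product_on_def)
    show "axis j 1 \<in> span (g ` {k. r j \<le> r k})"
      using g by (simp add: triangular_orthonormal_tail_def)
    show "B (g i) x = 0" if "x \<in> g ` {k. r j \<le> r k}" for x
      using that g \<open>r i < r j\<close> by (auto simp: triangular_orthonormal_tail_def)
  qed
  with g show thesis
    using that unfolding triangular_orthonormal_tail_def orthonormal_basis_def by blast
qed

section \<open>Self-adjoint maps respecting a grading\<close>

lemma linear_preserves_high_degree:
  fixes D :: "real^'n \<Rightarrow> real^'n" and w :: "real^'n"
  assumes D: "linear D"
    and entries: "\<And>i j. d i \<le> d j \<Longrightarrow> D (axis j 1) $ i = (if i = j then t * d j else 0)"
    and w: "\<And>i. d i \<le> e \<Longrightarrow> w $ i = 0" and "d i \<le> e"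
  shows "D w $ i = 0"
proof -
  have zero: "w $ j * D (axis j 1) $ i = 0" for j
    using w \<open>d i \<le> e\<close> entries[of i j] by (cases "d j \<le> e") auto
  show ?thesis
    by (subst linear_component_expansion[OF D]) (simp add: zero)
qed

text \<open>The vectors supported in degrees \<open>> d\<^sub>k\<close> form a \<open>D\<close>-invariant subspace that is
  orthogonal to \<open>g\<^sub>k\<close> and contains \<open>D g\<^sub>k - t d\<^sub>k g\<^sub>k\<close>.\<close>
lemma self_adjoint_graded_eigenvector:
  fixes B :: "real^'n::finite \<Rightarrow> real^'n \<Rightarrow> real" and r :: "'n \<Rightarrow> nat" and d :: "'n \<Rightarrow> real"
  assumes ip: "inner_product_on B"
    and tri: "\<And>i j. r j < r i \<Longrightarrow> g i $ j = 0"
    and perp: "\<And>i j. r i < r j \<Longrightarrow> B (g i) (axis j 1) = 0"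
    and d: "\<And>i j. r i \<le> r j \<Longrightarrow> d i \<le> d j"
    and D: "linear D" and adj: "\<And>X Y. B (D X) Y = B X (D Y)"
    and entries: "\<And>i j. d i \<le> d j \<Longrightarrow> D (axis j 1) $ i = (if i = j then t * d j else 0)"
  shows "D (g k) = (t * d k) *\<^sub>R g k"
proof -
  note B_simps = bilinear_simps[OF inner_product_on_bilinear[OF ip]]
  define W where "W = {w :: real^'n. \<forall>i. d i \<le> d k \<longrightarrow> w $ i = 0}"
  have perp_W: "B (g k) w = 0" if "w \<in> W" for w
  proof -
    have zero: "w $ j * B (g k) (axis j 1) = 0" for j
      using that perp[of k j] d[of j k] by (cases "r k < r j") (auto simp: W_def)
    have "linear (B (g k))"
      using ip by (simp add: inner_product_on_def)
    then show ?thesis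
      by (subst linear_axis_expansion) (simp_all add: zero)
  qed
  have D_W: "D w \<in> W" if "w \<in> W" for w
    using that by (auto simp: W_def intro!: linear_preserves_high_degree[OF D entries, where e="d k"])
  have diag: "g k $ j * D (axis j 1) $ i = (if j = i then t * d k * g k $ i else 0)"
    if "d i \<le> d k" for i j
  proof (cases "r j < r k")
    case False
    then have "d i \<le> d j"
      using that d[of k j] by simp
    moreover have "r i < r k \<or> d i = d k"
      using that d[of k i] by (cases "r i < r k") (auto simp: not_less)
    ultimately show ?thesis
      using tri[of i k] entries[of i j] by auto
  qed (use tri in auto)
  have "D (g k) $ i = t * d k * g k $ i" if "d i \<le> d k" for i
    using that by (subst linear_component_expansion[OF D]) (simp add: diag)
  define v where "v = D (g k) - (t * d k) *\<^sub>R g k"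
  then have "v \<in> W"
    using \<open>\<And>i. d i \<le> d k \<Longrightarrow> D (g k) $ i = t * d k * g k $ i\<close> by (simp add: W_def)
  have "B v v = B (g k) (D v) - t * d k * B (g k) v"
    by (subst (1) v_def) (simp add: B_simps adj)
  also have "\<dots> = 0"
    using perp_W D_W \<open>v \<in> W\<close> by simp
  finally show ?thesis
    using inner_product_on_self_eq_0[OF ip] by (simp add: v_def)
qed

section \<open>The algebra \<open>br7\<close>\<close>

lemma UNIV_7: "(UNIV :: 7 set) = {1, 2, 3, 4, 5, 6, 7}"
proof -
  have "card {1, 2, 3, 4, 5, 6, 7 :: 7} = CARD(7)"
    by simp
  then show ?thesis
    using card_subset_eq[of UNIV "{1, 2, 3, 4, 5, 6, 7 :: 7}"] by simp
qed

lemma sum_UNIV_7: "(\<Sum>i\<in>UNIV. f (i :: 7)) = f 1 + f 2 + f 3 + f 4 + f 5 + f 6 + (f 7 :: 'a::comm_monoid_add)"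
  unfolding UNIV_7 by (simp add: add.assoc)

lemma all_7: "(\<forall>i :: 7. P i) \<longleftrightarrow> P 1 \<and> P 2 \<and> P 3 \<and> P 4 \<and> P 5 \<and> P 6 \<and> P 7"
  by (metis UNIV_7 UNIV_I empty_iff insert_iff)

lemma cases_7: "(i :: 7) = 1 \<or> i = 2 \<or> i = 3 \<or> i = 4 \<or> i = 5 \<or> i = 6 \<or> i = 7"
  using UNIV_I[of i] unfolding UNIV_7 by blast

lemma axis_component: "axis i x $ j = (if j = i then x else 0)"
  by (simp add: axis_def)

text \<open>In the numeral type \<open>7\<close> the index \<open>7\<close> is \<open>0\<close>, so the order \<open>e\<^sub>1, \<dots>, e\<^sub>7\<close> has to be
  supplied separately.\<close>
definition rank7 :: "7 \<Rightarrow> nat" where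
  "rank7 i = (if i = 1 then 1 else if i = 2 then 2 else if i = 3 then 3 else if i = 4 then 4
              else if i = 5 then 5 else if i = 6 then 6 else 7)"

definition degree7 :: "7 \<Rightarrow> real" where
  "degree7 i = (if i = 1 then 1 else if i = 2 then 2 else if i = 3 then 3 else if i = 4 then 3
                else if i = 5 then 4 else if i = 6 then 5 else 7)"

lemma rank7_simps [simp]:
  "rank7 1 = 1" "rank7 2 = 2" "rank7 3 = 3" "rank7 4 = 4" "rank7 5 = 5" "rank7 6 = 6" "rank7 7 = 7"
  by (simp_all add: rank7_def)

lemma degree7_simps [simp]:
  "degree7 1 = 1" "degree7 2 = 2" "degree7 3 = 3" "degree7 4 = 3" "degree7 5 = 4" "degree7 6 = 5"
  "degree7 7 = 7"
  by (simp_all add: degree7_def)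

lemma inj_rank7: "inj rank7"
proof (rule injI)
  show "i = j" if "rank7 i = rank7 j" for i j
    using that cases_7[of i] cases_7[of j] by (elim disjE) simp_all
qed

lemma degree7_mono: "rank7 i \<le> rank7 j \<Longrightarrow> degree7 i \<le> degree7 j"
  using cases_7[of i] cases_7[of j] by (elim disjE) simp_all

lemma bilinear_br7: "bilinear br7"
  unfolding bilinear_def
  by (intro allI conjI linearI) (simp_all add: vec_eq_iff br7_def algebra_simps)

lemma br7_antisym: "br7 y x = - br7 x y"
  by (simp add: vec_eq_iff br7_def algebra_simps)

lemma br7_axis:
  "br7 (axis 1 1) (axis 2 1) = axis 4 1" "br7 (axis 1 1) (axis 3 1) = 0"
  "br7 (axis 1 1) (axis 4 1) = axis 5 1" "br7 (axis 1 1) (axis 5 1) = axis 6 1"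
  "br7 (axis 1 1) (axis 6 1) = 0" "br7 (axis 1 1) (axis 7 1) = 0"
  "br7 (axis 2 1) (axis 3 1) = axis 6 1" "br7 (axis 2 1) (axis 4 1) = axis 6 1"
  "br7 (axis 2 1) (axis 6 1) = axis 7 1" "br7 (axis 2 1) (axis 7 1) = 0"
  "br7 (axis 3 1) (axis 4 1) = 0"
  by (simp_all add: vec_eq_iff br7_def axis_def)

lemma br7_low_component: "rank7 j \<le> 3 \<Longrightarrow> br7 x y $ j = 0"
  using cases_7[of j] by (elim disjE) (simp_all add: br7_def axis_component)

lemma derivation_br7_entries:
  assumes "is_derivation br7 D" and "degree7 i \<le> degree7 j"
  shows "D (axis j 1) $ i = (if i = j then D (axis 1 1) $ 1 * degree7 j else 0)"
proof -
  have D: "linear D" and leibniz: "\<And>x y. D (br7 x y) = br7 (D x) y + br7 x (D y)"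
    using assms(1) unfolding is_derivation_def by auto
  note [simp] = vec_eq_iff all_7 br7_def axis_component linear_0[OF D]
  note leibniz_axes = leibniz[of "axis 1 1" "axis 2 1", unfolded br7_axis, simplified]
    leibniz[of "axis 1 1" "axis 3 1", unfolded br7_axis, simplified]
    leibniz[of "axis 1 1" "axis 4 1", unfolded br7_axis, simplified]
    leibniz[of "axis 1 1" "axis 5 1", unfolded br7_axis, simplified]
    leibniz[of "axis 1 1" "axis 6 1", unfolded br7_axis, simplified]
    leibniz[of "axis 1 1" "axis 7 1", unfolded br7_axis, simplified]
    leibniz[of "axis 2 1" "axis 3 1", unfolded br7_axis, simplified]
    leibniz[of "axis 2 1" "axis 4 1", unfolded br7_axis, simplified]
    leibniz[of "axis 2 1" "axis 6 1", unfolded br7_axis, simplified]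
    leibniz[of "axis 2 1" "axis 7 1", unfolded br7_axis, simplified]
    leibniz[of "axis 3 1" "axis 4 1", unfolded br7_axis, simplified]
  let ?t = "D (axis 1 1) $ 1"
  have entries:
    "D (axis 2 1) $ 1 = 0 \<and> D (axis 2 1) $ 2 = 2 * ?t \<and>
     D (axis 3 1) $ 1 = 0 \<and> D (axis 3 1) $ 2 = 0 \<and> D (axis 3 1) $ 3 = 3 * ?t \<and> D (axis 3 1) $ 4 = 0 \<and>
     D (axis 4 1) $ 1 = 0 \<and> D (axis 4 1) $ 2 = 0 \<and> D (axis 4 1) $ 3 = 0 \<and> D (axis 4 1) $ 4 = 3 * ?t \<and>
     D (axis 5 1) $ 1 = 0 \<and> D (axis 5 1) $ 2 = 0 \<and> D (axis 5 1) $ 3 = 0 \<and> D (axis 5 1) $ 4 = 0 \<and>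
     D (axis 5 1) $ 5 = 4 * ?t \<and>
     D (axis 6 1) $ 1 = 0 \<and> D (axis 6 1) $ 2 = 0 \<and> D (axis 6 1) $ 3 = 0 \<and> D (axis 6 1) $ 4 = 0 \<and>
     D (axis 6 1) $ 5 = 0 \<and> D (axis 6 1) $ 6 = 5 * ?t \<and>
     D (axis 7 1) $ 1 = 0 \<and> D (axis 7 1) $ 2 = 0 \<and> D (axis 7 1) $ 3 = 0 \<and> D (axis 7 1) $ 4 = 0 \<and>
     D (axis 7 1) $ 5 = 0 \<and> D (axis 7 1) $ 6 = 0 \<and> D (axis 7 1) $ 7 = 7 * ?t"
    using leibniz_axes by (elim conjE) (intro conjI; linarith)
  show ?thesis
    using assms(2) cases_7[of i] cases_7[of j] by (elim disjE) (simp_all add: entries)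
qed

lemma br7_diagonal_equations_solved:
  fixes s124 s135 s145 s156 s236 s246 s267 s357 s457 c t :: real
  assumes "- (s124\<^sup>2 + s145\<^sup>2 + s135\<^sup>2 + s156\<^sup>2) / 2 = c + t"
    and "- (s124\<^sup>2 + s236\<^sup>2 + s246\<^sup>2 + s267\<^sup>2) / 2 = c + 2 * t"
    and "- (s135\<^sup>2 + s236\<^sup>2 + s357\<^sup>2) / 2 = c + 3 * t"
    and "s124\<^sup>2 / 2 - (s145\<^sup>2 + s246\<^sup>2 + s457\<^sup>2) / 2 = c + 3 * t"
    and "(s145\<^sup>2 + s135\<^sup>2) / 2 - (s156\<^sup>2 + s457\<^sup>2 + s357\<^sup>2) / 2 = c + 4 * t"
    and "(s156\<^sup>2 + s236\<^sup>2 + s246\<^sup>2) / 2 - s267\<^sup>2 / 2 = c + 5 * t"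
    and "(s267\<^sup>2 + s457\<^sup>2 + s357\<^sup>2) / 2 = c + 7 * t"
  shows "s135\<^sup>2 = s246\<^sup>2 - s357\<^sup>2 + 44/25 * t" and "s145\<^sup>2 = - s246\<^sup>2 + s357\<^sup>2 + 46/25 * t"
    and "s236\<^sup>2 = - s246\<^sup>2 + 32/25 * t" and "s124\<^sup>2 = s457\<^sup>2 + s357\<^sup>2 - 6/5 * t"
  using assms by (simp add: field_simps)+

text \<open>With \<open>p = s\<^sub>2\<^sub>4\<^sub>6\<^sup>2\<close>, the proportionalities turn the off-diagonal equation into
  \<open>\<kappa> \<nu> p = -q\<close> with \<open>q = p + 44 t / 25 > 0\<close>, and positivity of \<open>s\<^sub>1\<^sub>2\<^sub>4\<^sup>2\<close> then gives
  \<open>r p \<ge> r p + 3344 t\<^sup>2 / 625\<close>, where \<open>r = \<nu>\<^sup>2 p\<close>.\<close>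
lemma br7_soliton_equations_inconsistent:
  fixes s124 s135 s145 s156 s236 s246 s267 s357 s457 c t \<kappa> \<nu> :: real
  assumes e1: "- (s124\<^sup>2 + s145\<^sup>2 + s135\<^sup>2 + s156\<^sup>2) / 2 = c + t"
    and e2: "- (s124\<^sup>2 + s236\<^sup>2 + s246\<^sup>2 + s267\<^sup>2) / 2 = c + 2 * t"
    and e3: "- (s135\<^sup>2 + s236\<^sup>2 + s357\<^sup>2) / 2 = c + 3 * t"
    and e4: "s124\<^sup>2 / 2 - (s145\<^sup>2 + s246\<^sup>2 + s457\<^sup>2) / 2 = c + 3 * t"
    and e5: "(s145\<^sup>2 + s135\<^sup>2) / 2 - (s156\<^sup>2 + s457\<^sup>2 + s357\<^sup>2) / 2 = c + 4 * t"
    and e6: "(s156\<^sup>2 + s236\<^sup>2 + s246\<^sup>2) / 2 - s267\<^sup>2 / 2 = c + 5 * t"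
    and e7: "(s267\<^sup>2 + s457\<^sup>2 + s357\<^sup>2) / 2 = c + 7 * t"
    and off: "s135 * s145 + s236 * s246 + s357 * s457 = 0"
    and r1: "s135 = \<kappa> * s145" and r2: "s357 = \<kappa> * s457" and r3: "s236 = \<nu> * s246"
    and "t \<noteq> 0"
  shows False
proof -
  define p where "p = s246\<^sup>2"
  define q where "q = p + 44/25 * t"
  define r where "r = \<nu>\<^sup>2 * p"
  note squares = br7_diagonal_equations_solved[OF e1 e2 e3 e4 e5 e6 e7, folded p_def]
  have p\<nu>: "p * (1 + \<nu>\<^sup>2) = 32/25 * t"
    using squares(3) r3 by (simp add: p_def power_mult_distrib algebra_simps)
  then have r_eq: "r = 32/25 * t - p"
    by (simp add: r_def algebra_simps)
  have "p \<ge> 0"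
    by (simp add: p_def)
  then have "p * (1 + \<nu>\<^sup>2) \<ge> 0"
    by simp
  then have "t > 0"
    using p\<nu> \<open>t \<noteq> 0\<close> by linarith
  then have "p > 0"
    using \<open>p \<ge> 0\<close> p\<nu> by (cases "p = 0") auto
  have "q > 0"
    using \<open>t > 0\<close> \<open>p > 0\<close> by (simp add: q_def)
  have "\<kappa> * (s135 * s145 + s236 * s246 + s357 * s457) = s135\<^sup>2 + \<kappa> * \<nu> * p + s357\<^sup>2"
    using r1 r2 r3 by (simp add: p_def power2_eq_square algebra_simps)
  then have \<kappa>\<nu>: "\<kappa> * \<nu> * p = - q"
    using off squares(1) by (simp add: q_def)
  then have "r > 0"
    using \<open>q > 0\<close> \<open>p > 0\<close> by (cases "\<nu> = 0") (auto simp: r_def)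
  have "s357\<^sup>2 * (1 + \<kappa>\<^sup>2) = q + \<kappa>\<^sup>2 * (p - 46/25 * t)"
    using squares(1,2) r1 by (simp add: q_def power_mult_distrib algebra_simps)
  moreover have "\<kappa>\<^sup>2 * (s457\<^sup>2 + s357\<^sup>2) = s357\<^sup>2 * (1 + \<kappa>\<^sup>2)"
    using r2 by (simp add: power_mult_distrib algebra_simps)
  moreover have "s457\<^sup>2 + s357\<^sup>2 \<ge> 6/5 * t"
    using squares(4) by (smt (verit) zero_le_power2)
  ultimately have "\<kappa>\<^sup>2 * (76/25 * t - p) \<le> q"
    using mult_left_mono[of "6/5 * t" "s457\<^sup>2 + s357\<^sup>2" "\<kappa>\<^sup>2"] by (simp add: algebra_simps)
  have "q * (q * (76/25 * t - p)) = \<kappa>\<^sup>2 * r * p * (76/25 * t - p)"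
    using arg_cong[OF \<kappa>\<nu>, of power2] by (simp add: r_def power2_eq_square algebra_simps)
  also have "\<dots> = \<kappa>\<^sup>2 * (76/25 * t - p) * (r * p)"
    by (simp add: algebra_simps)
  also have "\<dots> \<le> q * (r * p)"
    using \<open>\<kappa>\<^sup>2 * (76/25 * t - p) \<le> q\<close> \<open>r > 0\<close> \<open>p > 0\<close> by (intro mult_right_mono) simp_all
  finally have "q * (76/25 * t - p) \<le> r * p"
    using \<open>q > 0\<close> by simp
  moreover have "q * (76/25 * t - p) = r * p + 3344/625 * t\<^sup>2"
    unfolding q_def r_eq by (simp add: algebra_simps power2_eq_square)
  ultimately show False
    using \<open>t > 0\<close> by simp
qed

locale br7_adapted_basis =
  fixes B :: "real^7 \<Rightarrow> real^7 \<Rightarrow> real" and g :: "7 \<Rightarrow> real^7"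
  assumes ip: "inner_product_on B" and orthonormal: "orthonormal_basis B g"
    and triangular: "\<And>i j. rank7 j < rank7 i \<Longrightarrow> g i $ j = 0"
    and diagonal_pos: "\<And>i. g i $ i > 0"
    and perp: "\<And>i j. rank7 i < rank7 j \<Longrightarrow> B (g i) (axis j 1) = 0"
begin

abbreviation s :: "7 \<Rightarrow> 7 \<Rightarrow> 7 \<Rightarrow> real" where
  "s \<equiv> structure_constant br7 B g"

lemma derived_orthogonal_low:
  assumes "rank7 k \<le> 3"
  shows "B (br7 x y) (g k) = 0"
proof -
  have zero: "br7 x y $ j * B (g k) (axis j 1) = 0" for j
    using assms perp[of k j] br7_low_component[of j] by (cases "rank7 j \<le> 3") auto
  have "linear (B (g k))"
    using ip by (simp add: inner_product_on_def)
  then have "B (g k) (br7 x y) = 0"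
    by (subst linear_axis_expansion) (simp_all add: zero)
  then show ?thesis
    by (simp add: inner_product_on_sym[OF ip])
qed

lemma structure_constant_low: "rank7 k \<le> 3 \<Longrightarrow> s i j k = 0"
  by (simp add: structure_constant_def derived_orthogonal_low)

lemma br7_basis_component: "br7 (g i) (g j) $ m = (\<Sum>k\<in>UNIV. s i j k * g k $ m)"
proof -
  have "br7 (g i) (g j) = (\<Sum>k\<in>UNIV. s i j k *\<^sub>R g k)"
    unfolding structure_constant_def by (rule orthonormal_basis_expansion[OF ip orthonormal])
  then show ?thesis
    by simp
qed

lemma ricci_first_less_last: "ricci_form br7 B g (g 1) (g 1) < ricci_form br7 B g (g 7) (g 7)"
proof -
  have "br7 (g 1) (g 2) $ 4 = g 1 $ 1 * g 2 $ 2"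
    using triangular by (simp add: br7_def axis_component)
  then have "br7 (g 1) (g 2) \<noteq> 0"
    using diagonal_pos[of 1] diagonal_pos[of 2] by auto
  then have "ricci_form br7 B g (g 1) (g 1) < 0"
    by (intro ricci_form_neg_if_orthogonal_to_derived[OF ip] derived_orthogonal_low) simp_all
  moreover have "br7 (g 7) y = 0" for y
    using triangular by (simp add: vec_eq_iff br7_def axis_component)
  then have "ricci_form br7 B g (g 7) (g 7) \<ge> 0"
    by (rule ricci_form_nonneg_if_central[OF ip])
  ultimately show ?thesis
    by simp
qed

text \<open>\<open>\<kappa>\<close> is chosen so that \<open>g\<^sub>3 - \<kappa> g\<^sub>4\<close> has no \<open>e\<^sub>4\<close>-component, and \<open>\<nu>\<close> so that the
  \<open>e\<^sub>3\<close>- and \<open>e\<^sub>4\<close>-components of \<open>g\<^sub>3 - \<nu> g\<^sub>4\<close> cancel; the brackets of these vectors with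
  \<open>g\<^sub>1\<close>, \<open>g\<^sub>5\<close> and \<open>g\<^sub>2\<close> then lose their leading components.\<close>
lemma structure_constant_relations:
  assumes graded: "\<And>i j k. degree7 i + degree7 j \<noteq> degree7 k \<Longrightarrow> s i j k = 0"
  obtains \<kappa> \<nu> where "s 1 3 5 = \<kappa> * s 1 4 5" and "s 3 5 7 = \<kappa> * s 4 5 7"
    and "s 2 3 6 = \<nu> * s 2 4 6"
proof
  note leading = br7_basis_component[unfolded sum_UNIV_7]
  note vanishing = graded structure_constant_low triangular
  have g44: "g 4 $ 4 > 0" and g55: "g 5 $ 5 > 0" and g66: "g 6 $ 6 > 0" and g77: "g 7 $ 7 > 0"
    using diagonal_pos by simp_all
  define \<kappa> where "\<kappa> = g 3 $ 4 / g 4 $ 4"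
  define w where "w = g 3 - \<kappa> *\<^sub>R g 4"
  have w: "w $ 1 = 0" "w $ 2 = 0" "w $ 4 = 0"
    using g44 triangular by (simp_all add: w_def \<kappa>_def)
  have "(s 1 3 5 - \<kappa> * s 1 4 5) * g 5 $ 5 = br7 (g 1) w $ 5"
    by (simp add: w_def bilinear_simps[OF bilinear_br7] leading vanishing algebra_simps)
  also have "\<dots> = 0"
    using w by (simp add: br7_def axis_component)
  finally show "s 1 3 5 = \<kappa> * s 1 4 5"
    using g55 by simp
  have "(s 3 5 7 - \<kappa> * s 4 5 7) * g 7 $ 7 = br7 w (g 5) $ 7"
    by (simp add: w_def bilinear_simps[OF bilinear_br7] leading vanishing algebra_simps)
  also have "\<dots> = 0"
    using w triangular by (simp add: br7_def axis_component)
  finally show "s 3 5 7 = \<kappa> * s 4 5 7"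
    using g77 by simp
  define \<nu> where "\<nu> = (g 3 $ 3 + g 3 $ 4) / g 4 $ 4"
  define w' where "w' = g 3 - \<nu> *\<^sub>R g 4"
  have w': "w' $ 1 = 0" "w' $ 2 = 0" "w' $ 3 + w' $ 4 = 0"
    using g44 triangular by (simp_all add: w'_def \<nu>_def)
  have "(s 2 3 6 - \<nu> * s 2 4 6) * g 6 $ 6 = br7 (g 2) w' $ 6"
    by (simp add: w'_def bilinear_simps[OF bilinear_br7] leading vanishing algebra_simps)
  also have "\<dots> = g 2 $ 2 * (w' $ 3 + w' $ 4)"
    using w'(1,2) triangular by (simp add: br7_def axis_component algebra_simps)
  also have "\<dots> = 0"
    using w' by simp
  finally show "s 2 3 6 = \<nu> * s 2 4 6"
    using g66 by simp
qed

lemma graded_ricci_impossible: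
  assumes graded: "\<And>i j k. degree7 i + degree7 j \<noteq> degree7 k \<Longrightarrow> s i j k = 0"
    and ricci: "\<And>i j. ricci_form br7 B g (g i) (g j) = (if i = j then c + t * degree7 i else 0)"
    and "t \<noteq> 0"
  shows False
proof -
  obtain \<kappa> \<nu> where relations: "s 1 3 5 = \<kappa> * s 1 4 5" "s 3 5 7 = \<kappa> * s 4 5 7" "s 2 3 6 = \<nu> * s 2 4 6"
    using structure_constant_relations[OF graded] by blast
  have antisym: "s j i k = - s i j k" for i j k
    unfolding structure_constant_def
    by (subst br7_antisym) (simp add: bilinear_lneg[OF inner_product_on_bilinear[OF ip]])
  have "s i i k = 0" for i k
    using antisym[of i i k] by simp
  note vanishing = graded structure_constant_low this
    antisym[of 2 1 4] antisym[of 4 1 5] antisym[of 3 1 5] antisym[of 5 1 6] antisym[of 3 2 6]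
    antisym[of 4 2 6] antisym[of 6 2 7] antisym[of 5 4 7] antisym[of 5 3 7]
  note ricci_s = ricci[unfolded ricci_form_structure_constants[OF ip orthonormal] sum_UNIV_7]
  have "- ((s 1 2 4)\<^sup>2 + (s 1 4 5)\<^sup>2 + (s 1 3 5)\<^sup>2 + (s 1 5 6)\<^sup>2) / 2 = c + t"
    using ricci_s[of 1 1] by (simp add: vanishing power2_eq_square field_simps)
  moreover have "- ((s 1 2 4)\<^sup>2 + (s 2 3 6)\<^sup>2 + (s 2 4 6)\<^sup>2 + (s 2 6 7)\<^sup>2) / 2 = c + 2 * t"
    using ricci_s[of 2 2] by (simp add: vanishing power2_eq_square field_simps)
  moreover have "- ((s 1 3 5)\<^sup>2 + (s 2 3 6)\<^sup>2 + (s 3 5 7)\<^sup>2) / 2 = c + 3 * t"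
    using ricci_s[of 3 3] by (simp add: vanishing power2_eq_square field_simps)
  moreover have "(s 1 2 4)\<^sup>2 / 2 - ((s 1 4 5)\<^sup>2 + (s 2 4 6)\<^sup>2 + (s 4 5 7)\<^sup>2) / 2 = c + 3 * t"
    using ricci_s[of 4 4] by (simp add: vanishing power2_eq_square field_simps)
  moreover have "((s 1 4 5)\<^sup>2 + (s 1 3 5)\<^sup>2) / 2 - ((s 1 5 6)\<^sup>2 + (s 4 5 7)\<^sup>2 + (s 3 5 7)\<^sup>2) / 2
      = c + 4 * t"
    using ricci_s[of 5 5] by (simp add: vanishing power2_eq_square field_simps)
  moreover have "((s 1 5 6)\<^sup>2 + (s 2 3 6)\<^sup>2 + (s 2 4 6)\<^sup>2) / 2 - (s 2 6 7)\<^sup>2 / 2 = c + 5 * t"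
    using ricci_s[of 6 6] by (simp add: vanishing power2_eq_square field_simps)
  moreover have "((s 2 6 7)\<^sup>2 + (s 4 5 7)\<^sup>2 + (s 3 5 7)\<^sup>2) / 2 = c + 7 * t"
    using ricci_s[of 7 7] by (simp add: vanishing power2_eq_square field_simps)
  moreover have "s 1 3 5 * s 1 4 5 + s 2 3 6 * s 2 4 6 + s 3 5 7 * s 4 5 7 = 0"
    using ricci_s[of 3 4] by (simp add: vanishing field_simps)
  ultimately show False
    using br7_soliton_equations_inconsistent relations \<open>t \<noteq> 0\<close> by blast
qed

lemma no_nilsoliton_derivation:
  assumes der: "is_derivation br7 D" and adj: "\<And>X Y. B (D X) Y = B X (D Y)"
    and ricci: "\<And>X Y. ricci_form br7 B g X Y = c * B X Y + B (D X) Y"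
  shows False
proof -
  define t where "t = D (axis 1 1) $ 1"
  have lin: "linear D"
    using der by (simp add: is_derivation_def)
  note entries = derivation_br7_entries[OF der, folded t_def]
  have eigen: "D (g k) = (t * degree7 k) *\<^sub>R g k" for k
    using self_adjoint_graded_eigenvector[OF ip triangular perp degree7_mono lin adj entries] .
  have "B (g i) (g j) = (if i = j then 1 else 0)" for i j
    using orthonormal by (simp add: orthonormal_basis_def)
  then have ricci_g: "ricci_form br7 B g (g i) (g j) = (if i = j then c + t * degree7 i else 0)" for i j
    using ricci[of "g i" "g j"] eigen[of i] by (simp add: bilinear_lmul[OF inner_product_on_bilinear[OF ip]])
  show False
  proof (cases "t = 0")
    case True
    then show False
      using ricci_first_less_last ricci_g by simp
  next
    case False
    have "s i j k = 0" if "degree7 i + degree7 j \<noteq> degree7 k" for i j k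
    proof -
      have "t * (degree7 i + degree7 j - degree7 k) * s i j k = 0"
        using structure_constant_eigenvalues[where \<mu>="\<lambda>k. t * degree7 k", OF ip bilinear_br7 der adj eigen]
        by (simp add: algebra_simps)
      then show ?thesis
        using that False by simp
    qed
    then show False
      using graded_ricci_impossible ricci_g False by blast
  qed
qed

end

theorem mainTheorem7:
  shows "\<not> einstein_nilradical br7"
proof
  assume "einstein_nilradical br7"
  then obtain B where ip: "inner_product_on B" and "nilsoliton br7 B"
    unfolding einstein_nilradical_def by blast
  then obtain c D where der: "is_derivation br7 D" and adj: "\<And>X Y. B (D X) Y = B X (D Y)"
    and ricci: "\<And>g X Y. orthonormal_basis B g \<Longrightarrow> ricci_form br7 B g X Y = c * B X Y + B (D X) Y"
    using nilsoliton_normal_form[OF ip bilinear_br7] by metis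
  obtain g where "orthonormal_basis B g" and "\<And>i j. rank7 j < rank7 i \<Longrightarrow> g i $ j = 0"
    and "\<And>i. g i $ i > 0" and "\<And>i j. rank7 i < rank7 j \<Longrightarrow> B (g i) (axis j 1) = 0"
    using triangular_orthonormal_basis[OF ip inj_rank7] by blast
  with ip interpret br7_adapted_basis B g
    by unfold_locales
  show False
    using no_nilsoliton_derivation[OF der adj ricci[OF orthonormal]] .
qed

end
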